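(* Let $\mathcal T$ be an orbital category and $\mathcal C$ a $\mathcal T$-weak indexing system. Then $\mathcal C$ is almost essentially unital if and only if, whenever $S\in\mathcal C_V$ is not isomorphic to $*_V$, we have $V\in\upsilon(\mathcal C)$.
   Context: For a small category $\mathcal T$, $\mathbb F_{\mathcal T}$ is the full subcategory of $\mathrm{Fun}(\mathcal T^{op},\mathrm{Set})$ on finite coproducts of representables; $\mathcal T$ is orbital if $\mathbb F_{\mathcal T}$ has pullbacks. $\mathbb F_V:=\mathbb F_{\mathcal T,/V}$, $*_V$ terminal, $\emptyset_V$ initial; for $U\to V$ in $\mathcal T$, $\mathrm{Res}^V_U$ is pullback and $\mathrm{Ind}^V_U$ postcomposition. A full $\mathcal T$-subcategory $\mathcal C$ assigns isomorphism-closed classes $\mathcal C_V\subseteq\mathrm{Ob}\,\mathbb F_V$ stable under all restrictions. For $S\in\mathbb F_V$ with orbits $U\in\mathrm{Orb}(S)$ and $T_U\in\mathbb F_U$, $\coprod_U^ST_U:=\coprod_U\mathrm{Ind}_U^VT_U$. A $\mathcal T$-weak indexing system is a full $\mathcal T$-subcategory $\mathcal C$ with $\mathcal C_V\neq\emptyset\Rightarrow *_V\in\mathcal C_V$ and closed under $\coprod^S_U T_U$ for $S\in\mathcal C_V$, $T_U\in\mathcal C_U$. It is almost essentially unital if whenever $S\sqcup S'\in\mathcal C_V$ is not isomorphic to $*_V$, we have $S,S'\in\mathcal C_V$. $\upsilon(\mathcal C)=\{V\mid\emptyset_V\in\mathcal C_V\}$. *)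

theory Defs
  imports Main
begin

text \<open>A small category T, given by a set of objects, hom-sets, composition
  (cmp g f = g after f) and identities.\<close>
record ('o,'m) cat =
  Ob  :: "'o set"
  Hom :: "'o \<Rightarrow> 'o \<Rightarrow> 'm set"
  cmp :: "'m \<Rightarrow> 'm \<Rightarrow> 'm"
  idt :: "'o \<Rightarrow> 'm"

definition category :: "('o,'m) cat \<Rightarrow> bool" where
  "category T \<longleftrightarrow>
     (\<forall>x\<in>Ob T. idt T x \<in> Hom T x x) \<and>
     (\<forall>x\<in>Ob T. \<forall>y\<in>Ob T. \<forall>z\<in>Ob T. \<forall>f g. f \<in> Hom T x y \<and> g \<in> Hom T y z
          \<longrightarrow> cmp T g f \<in> Hom T x z) \<and>
     (\<forall>x\<in>Ob T. \<forall>y\<in>Ob T. \<forall>f\<in>Hom T x y. cmp T f (idt T x) = f \<and> cmp T (idt T y) f = f) \<and>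
     (\<forall>w\<in>Ob T. \<forall>x\<in>Ob T. \<forall>y\<in>Ob T. \<forall>z\<in>Ob T. \<forall>f g h.
          f \<in> Hom T w x \<and> g \<in> Hom T x y \<and> h \<in> Hom T y z
          \<longrightarrow> cmp T h (cmp T g f) = cmp T (cmp T h g) f)"

text \<open>The category F_T of finite coproducts of representables (finite coproduct
  completion of T).  An object is a finite list [U_0,..,U_{n-1}] of objects of T,
  standing for the coproduct of the representables y(U_i).  By Yoneda, a morphism
  from the coproduct of the y(U_i) to the coproduct of the y(W_j) is a pair (phi, alpha)
  with phi i < length of target and alpha i : U_i -> W_{phi i}; two such pairs are
  equal iff they agree on all indices i < length of the source.\<close>
type_synonym 'm fmor = "(nat \<Rightarrow> nat) \<times> (nat \<Rightarrow> 'm)"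

definition F_obj :: "('o,'m) cat \<Rightarrow> 'o list \<Rightarrow> bool" where
  "F_obj T xs \<longleftrightarrow> set xs \<subseteq> Ob T"

definition F_hom :: "('o,'m) cat \<Rightarrow> 'o list \<Rightarrow> 'o list \<Rightarrow> 'm fmor \<Rightarrow> bool" where
  "F_hom T xs ys m \<longleftrightarrow>
     (\<forall>i<length xs. fst m i < length ys \<and> snd m i \<in> Hom T (xs!i) (ys!(fst m i)))"

definition F_comp :: "('o,'m) cat \<Rightarrow> 'm fmor \<Rightarrow> 'm fmor \<Rightarrow> 'm fmor" where
  "F_comp T n m = (fst n \<circ> fst m, \<lambda>i. cmp T (snd n (fst m i)) (snd m i))"

definition F_id :: "('o,'m) cat \<Rightarrow> 'o list \<Rightarrow> 'm fmor" where
  "F_id T xs = (id, \<lambda>i. idt T (xs!i))"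

definition F_eq :: "'o list \<Rightarrow> 'm fmor \<Rightarrow> 'm fmor \<Rightarrow> bool" where
  "F_eq xs m m' \<longleftrightarrow> (\<forall>i<length xs. fst m i = fst m' i \<and> snd m i = snd m' i)"

definition is_pullback ::
  "('o,'m) cat \<Rightarrow> 'o list \<Rightarrow> 'o list \<Rightarrow> 'o list \<Rightarrow> 'm fmor \<Rightarrow> 'm fmor
     \<Rightarrow> 'o list \<Rightarrow> 'm fmor \<Rightarrow> 'm fmor \<Rightarrow> bool" where
  "is_pullback T xs ys zs f g ps p1 p2 \<longleftrightarrow>
     F_obj T ps \<and> F_hom T ps xs p1 \<and> F_hom T ps ys p2 \<and>
     F_eq ps (F_comp T f p1) (F_comp T g p2) \<and>
     (\<forall>qs q1 q2. F_obj T qs \<and> F_hom T qs xs q1 \<and> F_hom T qs ys q2 \<and>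
        F_eq qs (F_comp T f q1) (F_comp T g q2) \<longrightarrow>
        (\<exists>h. F_hom T qs ps h \<and> F_eq qs (F_comp T p1 h) q1 \<and> F_eq qs (F_comp T p2 h) q2 \<and>
           (\<forall>h'. F_hom T qs ps h' \<and> F_eq qs (F_comp T p1 h') q1 \<and> F_eq qs (F_comp T p2 h') q2
              \<longrightarrow> F_eq qs h h')))"

definition orbital :: "('o,'m) cat \<Rightarrow> bool" where
  "orbital T \<longleftrightarrow>
     (\<forall>xs ys zs f g. F_obj T xs \<and> F_obj T ys \<and> F_obj T zs \<and>
        F_hom T xs zs f \<and> F_hom T ys zs g \<longrightarrow> (\<exists>ps p1 p2. is_pullback T xs ys zs f g ps p1 p2))"

text \<open>The slice F_V = F_T / y(V).  An object is a list of pairs (U_i, a_i) with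
  a_i : U_i -> V (the structure map restricted to the i-th orbit).\<close>
definition FV_obj :: "('o,'m) cat \<Rightarrow> 'o \<Rightarrow> ('o \<times> 'm) list \<Rightarrow> bool" where
  "FV_obj T V S \<longleftrightarrow> (\<forall>p\<in>set S. fst p \<in> Ob T \<and> snd p \<in> Hom T (fst p) V)"

definition FV_hom :: "('o,'m) cat \<Rightarrow> 'o \<Rightarrow> ('o \<times> 'm) list \<Rightarrow> ('o \<times> 'm) list \<Rightarrow> 'm fmor \<Rightarrow> bool" where
  "FV_hom T V S S' m \<longleftrightarrow> F_hom T (map fst S) (map fst S') m \<and>
     (\<forall>i<length S. cmp T (snd (S'!(fst m i))) (snd m i) = snd (S!i))"

definition FV_iso :: "('o,'m) cat \<Rightarrow> 'o \<Rightarrow> ('o \<times> 'm) list \<Rightarrow> ('o \<times> 'm) list \<Rightarrow> bool" where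
  "FV_iso T V S S' \<longleftrightarrow> (\<exists>f g. FV_hom T V S S' f \<and> FV_hom T V S' S g \<and>
     F_eq (map fst S) (F_comp T g f) (F_id T (map fst S)) \<and>
     F_eq (map fst S') (F_comp T f g) (F_id T (map fst S')))"

definition star :: "('o,'m) cat \<Rightarrow> 'o \<Rightarrow> ('o \<times> 'm) list" where
  "star T V = [(V, idt T V)]"

definition empt :: "('o \<times> 'm) list" where
  "empt = []"

definition struct_map :: "('o \<times> 'm) list \<Rightarrow> 'm fmor" where
  "struct_map S = (\<lambda>_. 0, \<lambda>i. snd (S!i))"

text \<open>Full T-subcategory: iso-closed classes C_V of objects of F_V, stable under
  restriction along every u : U -> V (restriction = pullback along y(u); since the
  classes are iso-closed we require membership for every pullback).\<close>
definition full_T_subcat :: "('o,'m) cat \<Rightarrow> ('o \<Rightarrow> ('o \<times> 'm) list set) \<Rightarrow> bool" where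
  "full_T_subcat T C \<longleftrightarrow>
     (\<forall>V\<in>Ob T. \<forall>S\<in>C V. FV_obj T V S) \<and>
     (\<forall>V\<in>Ob T. \<forall>S S'. S \<in> C V \<and> FV_obj T V S' \<and> FV_iso T V S S' \<longrightarrow> S' \<in> C V) \<and>
     (\<forall>U\<in>Ob T. \<forall>V\<in>Ob T. \<forall>u\<in>Hom T U V. \<forall>S\<in>C V. \<forall>ps p1 p2.
        is_pullback T (map fst S) [U] [V] (struct_map S) (\<lambda>_. 0, \<lambda>_. u) ps p1 p2
        \<longrightarrow> zip ps (map (snd p2) [0..<length ps]) \<in> C U)"

text \<open>Induction along u : U -> V (postcomposition) and the indexed coproduct
  of T_U over the orbits U of S (orbits indexed by position in S).\<close>
definition Ind :: "('o,'m) cat \<Rightarrow> 'm \<Rightarrow> ('o \<times> 'm) list \<Rightarrow> ('o \<times> 'm) list" where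
  "Ind T u S = map (\<lambda>(W, b). (W, cmp T u b)) S"

definition indexed_coprod ::
  "('o,'m) cat \<Rightarrow> ('o \<times> 'm) list \<Rightarrow> (nat \<Rightarrow> ('o \<times> 'm) list) \<Rightarrow> ('o \<times> 'm) list" where
  "indexed_coprod T S Tf = concat (map (\<lambda>i. Ind T (snd (S!i)) (Tf i)) [0..<length S])"

definition weak_indexing_system :: "('o,'m) cat \<Rightarrow> ('o \<Rightarrow> ('o \<times> 'm) list set) \<Rightarrow> bool" where
  "weak_indexing_system T C \<longleftrightarrow> full_T_subcat T C \<and>
     (\<forall>V\<in>Ob T. C V \<noteq> {} \<longrightarrow> star T V \<in> C V) \<and>
     (\<forall>V\<in>Ob T. \<forall>S\<in>C V. \<forall>Tf. (\<forall>i<length S. Tf i \<in> C (fst (S!i)))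
        \<longrightarrow> indexed_coprod T S Tf \<in> C V)"

text \<open>S \<squnion> S' in F_V is the concatenation S @ S'.\<close>
definition almost_essentially_unital :: "('o,'m) cat \<Rightarrow> ('o \<Rightarrow> ('o \<times> 'm) list set) \<Rightarrow> bool" where
  "almost_essentially_unital T C \<longleftrightarrow>
     (\<forall>V\<in>Ob T. \<forall>S S'. FV_obj T V S \<and> FV_obj T V S' \<and> S @ S' \<in> C V \<and>
        \<not> FV_iso T V (S @ S') (star T V) \<longrightarrow> S \<in> C V \<and> S' \<in> C V)"

definition upsilon :: "('o,'m) cat \<Rightarrow> ('o \<Rightarrow> ('o \<times> 'm) list set) \<Rightarrow> 'o set" where
  "upsilon T C = {V \<in> Ob T. empt \<in> C V}"

end

theory Submission
  imports Defs
begin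

text \<open>If \<open>C\<close> is almost essentially unital and \<open>S \<in> C\<^sub>V\<close> is not \<open>*\<^sub>V\<close>, splitting
  \<open>S = S \<squnion> \<emptyset>\<^sub>V\<close> gives \<open>\<emptyset>\<^sub>V \<in> C\<^sub>V\<close>.  Conversely, if \<open>S \<squnion> S' \<in> C\<^sub>V\<close> with \<open>\<emptyset>\<^sub>V \<in> C\<^sub>V\<close>,
  restriction gives \<open>\<emptyset>\<^sub>U \<in> C\<^sub>U\<close> and hence \<open>*\<^sub>U \<in> C\<^sub>U\<close> for every orbit \<open>U\<close> of \<open>S \<squnion> S'\<close>;
  the indexed coproduct over \<open>S \<squnion> S'\<close> of \<open>*\<^sub>U\<close> on the orbits of \<open>S\<close> and \<open>\<emptyset>\<^sub>U\<close> on those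
  of \<open>S'\<close> is \<open>S\<close>, and symmetrically for \<open>S'\<close>.\<close>

lemma indexed_coprod_cong:
  "(\<And>i. i < length S \<Longrightarrow> Tf i = Tf' i) \<Longrightarrow> indexed_coprod T S Tf = indexed_coprod T S Tf'"
  unfolding indexed_coprod_def by (intro arg_cong[where f = concat] map_cong) auto

lemma indexed_coprod_append:
  "indexed_coprod T (S @ S') Tf =
     indexed_coprod T S Tf @ indexed_coprod T S' (\<lambda>i. Tf (i + length S))"
proof -
  have split: "[0..<length (S @ S')] = [0..<length S] @ map (\<lambda>i. i + length S) [0..<length S']"
    using upt_add_eq_append[of 0 "length S" "length S'"]
    by (simp add: map_add_upt add.commute[of "length S'"])
  show ?thesis
    unfolding indexed_coprod_def split map_append concat_append map_map comp_def
    by (intro arg_cong2[where f = "(@)"] arg_cong[where f = concat] map_cong) (simp_all add: nth_append)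
qed

lemma indexed_coprod_Nil: "indexed_coprod T S (\<lambda>_. []) = []"
  unfolding indexed_coprod_def Ind_def by simp

lemma Ind_star:
  assumes "category T" and "U \<in> Ob T" and "V \<in> Ob T" and "u \<in> Hom T U V"
  shows "Ind T u (star T U) = [(U, u)]"
proof -
  have "cmp T u (idt T U) = u"
    using assms unfolding category_def by blast
  then show ?thesis
    unfolding Ind_def star_def by simp
qed

lemma indexed_coprod_star:
  assumes "category T" and "V \<in> Ob T" and "FV_obj T V S"
  shows "indexed_coprod T S (\<lambda>i. star T (fst (S ! i))) = S"
proof -
  have "Ind T (snd (S ! i)) (star T (fst (S ! i))) = [S ! i]" if "i < length S" for i
    using assms that Ind_star[of T "fst (S ! i)" V "snd (S ! i)"]
    unfolding FV_obj_def by simp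
  then have "indexed_coprod T S (\<lambda>i. star T (fst (S ! i))) = concat (map (\<lambda>i. [S ! i]) [0..<length S])"
    unfolding indexed_coprod_def by (intro arg_cong[where f = concat] map_cong) auto
  also have "\<dots> = S"
    by (simp add: map_nth)
  finally show ?thesis .
qed

lemma is_pullback_Nil:
  "is_pullback T (map fst []) [U] [V] (struct_map []) (\<lambda>_. 0, \<lambda>_. u) [] p1 p2"
  unfolding is_pullback_def
proof (intro conjI allI impI)
  fix qs q1 q2
  assume "F_obj T qs \<and> F_hom T qs (map fst []) q1 \<and> F_hom T qs [U] q2 \<and>
    F_eq qs (F_comp T (struct_map []) q1) (F_comp T (\<lambda>_. 0, \<lambda>_. u) q2)"
  then have "qs = []"
    unfolding F_hom_def by (cases qs) auto
  then show "\<exists>h. F_hom T qs [] h \<and> F_eq qs (F_comp T p1 h) q1 \<and> F_eq qs (F_comp T p2 h) q2 \<and>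
    (\<forall>h'. F_hom T qs [] h' \<and> F_eq qs (F_comp T p1 h') q1 \<and> F_eq qs (F_comp T p2 h') q2
       \<longrightarrow> F_eq qs h h')"
    by (simp add: F_hom_def F_eq_def)
qed (simp_all add: F_obj_def F_hom_def F_eq_def)

lemma weak_indexing_system_FV_obj:
  assumes "weak_indexing_system T C" and "V \<in> Ob T" and "S \<in> C V"
  shows "FV_obj T V S"
  using assms unfolding weak_indexing_system_def full_T_subcat_def by blast

lemma weak_indexing_system_Nil_restrict:
  assumes "weak_indexing_system T C" and "V \<in> Ob T" and "[] \<in> C V"
    and "U \<in> Ob T" and "u \<in> Hom T U V"
  shows "[] \<in> C U"
proof -
  have "\<forall>U\<in>Ob T. \<forall>V\<in>Ob T. \<forall>u\<in>Hom T U V. \<forall>S\<in>C V. \<forall>ps p1 p2.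
      is_pullback T (map fst S) [U] [V] (struct_map S) (\<lambda>_. 0, \<lambda>_. u) ps p1 p2
      \<longrightarrow> zip ps (map (snd p2) [0..<length ps]) \<in> C U"
    using assms(1) unfolding weak_indexing_system_def full_T_subcat_def by blast
  from this[rule_format, OF assms(4,2,5,3) is_pullback_Nil] show ?thesis
    by simp
qed

lemma weak_indexing_system_summands:
  assumes cat: "category T" and wis: "weak_indexing_system T C" and V: "V \<in> Ob T"
    and Nil: "[] \<in> C V" and L: "S @ S' \<in> C V"
  shows "S \<in> C V" and "S' \<in> C V"
proof -
  let ?L = "S @ S'"
  have orbit: "fst (?L ! i) \<in> Ob T" "snd (?L ! i) \<in> Hom T (fst (?L ! i)) V" if "i < length ?L" for i
    using weak_indexing_system_FV_obj[OF wis V L] nth_mem[OF that] unfolding FV_obj_def by blast+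
  have Nil_orbit: "[] \<in> C (fst (?L ! i))" if "i < length ?L" for i
    using weak_indexing_system_Nil_restrict[OF wis V Nil] orbit[OF that] by blast
  moreover have "star T (fst (?L ! i)) \<in> C (fst (?L ! i))" if "i < length ?L" for i
    using wis Nil_orbit[OF that] orbit[OF that] unfolding weak_indexing_system_def by blast
  ultimately have select_in_C: "indexed_coprod T ?L (\<lambda>i. if P i then star T (fst (?L ! i)) else []) \<in> C V"
    for P
    using wis V L unfolding weak_indexing_system_def by simp
  have S: "FV_obj T V S" and S': "FV_obj T V S'"
    using weak_indexing_system_FV_obj[OF wis V L] unfolding FV_obj_def by auto
  have "indexed_coprod T ?L (\<lambda>i. if i < length S then star T (fst (?L ! i)) else []) =
    indexed_coprod T S (\<lambda>i. star T (fst (S ! i))) @ indexed_coprod T S' (\<lambda>_. [])"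
    unfolding indexed_coprod_append by (intro arg_cong2[where f = "(@)"] indexed_coprod_cong)
      (simp_all add: nth_append)
  then show "S \<in> C V"
    using select_in_C[of "\<lambda>i. i < length S"]
    by (simp add: indexed_coprod_star[OF cat V S] indexed_coprod_Nil)
  have "indexed_coprod T ?L (\<lambda>i. if \<not> i < length S then star T (fst (?L ! i)) else []) =
    indexed_coprod T S (\<lambda>_. []) @ indexed_coprod T S' (\<lambda>i. star T (fst (S' ! i)))"
    unfolding indexed_coprod_append by (intro arg_cong2[where f = "(@)"] indexed_coprod_cong)
      (simp_all add: nth_append)
  then show "S' \<in> C V"
    using select_in_C[of "\<lambda>i. \<not> i < length S"]
    by (simp add: indexed_coprod_star[OF cat V S'] indexed_coprod_Nil)
qed

theorem mainTheorem7:
  fixes T :: "('o,'m) cat" and C :: "'o \<Rightarrow> ('o \<times> 'm) list set"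
  assumes "category T" and "orbital T" and "weak_indexing_system T C"
  shows "almost_essentially_unital T C \<longleftrightarrow>
    (\<forall>V\<in>Ob T. \<forall>S\<in>C V. \<not> FV_iso T V S (star T V) \<longrightarrow> V \<in> upsilon T C)"
proof
  assume aeu: "almost_essentially_unital T C"
  show "\<forall>V\<in>Ob T. \<forall>S\<in>C V. \<not> FV_iso T V S (star T V) \<longrightarrow> V \<in> upsilon T C"
  proof (intro ballI impI)
    fix V S assume V: "V \<in> Ob T" and S: "S \<in> C V" and "\<not> FV_iso T V S (star T V)"
    moreover have "FV_obj T V S" and "FV_obj T V []"
      using weak_indexing_system_FV_obj[OF assms(3) V S] by (simp_all add: FV_obj_def)
    ultimately have "[] \<in> C V"
      using aeu unfolding almost_essentially_unital_def by (metis append_Nil2)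
    with V show "V \<in> upsilon T C" unfolding upsilon_def empt_def by simp
  qed
next
  assume "\<forall>V\<in>Ob T. \<forall>S\<in>C V. \<not> FV_iso T V S (star T V) \<longrightarrow> V \<in> upsilon T C"
  then show "almost_essentially_unital T C"
    using weak_indexing_system_summands[OF assms(1,3)]
    unfolding almost_essentially_unital_def upsilon_def empt_def by blast
qed

end
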